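(* Let $K\ge2$ and let $\mathbf{W},\mathbf{W}'$ be $K\times K$ invertible row-stochastic matrices. Then, entrywise, $$\boldsymbol{\Phi}(\mathbf{W}\mathbf{W}')\ge\boldsymbol{\Phi}(\mathbf{W}),$$ with equality in all $K^2$ entries if and only if $\mathbf{W}'$ is a permutation matrix.
   Context: For an invertible matrix $\mathbf{W}$, $\boldsymbol{\Phi}(\mathbf{W})=\mathbf{W}(\mathbf{W}^{-1}\odot\mathbf{W}^{-1})$, where $\odot$ is the entrywise (Hadamard) product. A matrix inequality $\mathbf{A}\ge\mathbf{B}$ means $A_{k,\ell}\ge B_{k,\ell}$ for all $k,\ell$. *)

theory Defs
  imports "HOL-Analysis.Analysis"
begin

definition hadamard :: "real^'n^'n \<Rightarrow> real^'n^'n \<Rightarrow> real^'n^'n" where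
  "hadamard A B = (\<chi> i j. A $ i $ j * B $ i $ j)"

definition Phi :: "real^'n^'n \<Rightarrow> real^'n^'n" where
  "Phi W = W ** hadamard (matrix_inv W) (matrix_inv W)"

definition row_stochastic :: "real^'n^'n \<Rightarrow> bool" where
  "row_stochastic W \<longleftrightarrow> (\<forall>i j. W $ i $ j \<ge> 0) \<and> (\<forall>i. (\<Sum>j\<in>UNIV. W $ i $ j) = 1)"

definition permutation_matrix :: "real^'n^'n \<Rightarrow> bool" where
  "permutation_matrix P \<longleftrightarrow>
     (\<exists>p. p permutes (UNIV :: 'n set) \<and> P = (\<chi> i j. if j = p i then 1 else 0))"

definition mat_ge :: "real^'n^'n \<Rightarrow> real^'n^'n \<Rightarrow> bool" where
  "mat_ge A B \<longleftrightarrow> (\<forall>k l. A $ k $ l \<ge> B $ k $ l)"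

end

theory Submission
  imports Defs
begin

text \<open>Write U for the inverse of W W', so that W^-1 = W' U. Entry (k, l) of Phi(W W') is the
  sum over m of W k m times the mean of (U j l)^2 over j, weighted by the row W' m; in entry (k, l)
  of Phi(W) this mean of squares becomes the square of the mean. Since the rows of W' are
  probability vectors, the difference is a nonnegative combination of variances. Every column of
  the invertible W has a nonzero entry, so equality everywhere forces all these variances to
  vanish: each column of U is constant on the support of each row of W'. As the rows of U are
  distinct, every row of W' is a unit vector, and invertibility of W' makes these unit vectors
  distinct.\<close>

lemma
  fixes A :: "'a::semiring_1^'n^'n"
  assumes "invertible A"
  shows matrix_inv_right: "A ** matrix_inv A = mat 1"
    and matrix_inv_left: "matrix_inv A ** A = mat 1"
  using someI_ex[OF assms[unfolded invertible_def]] unfolding matrix_inv_def by auto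

lemma invertible_matrix_inv:
  fixes A :: "'a::semiring_1^'n^'n"
  assumes "invertible A"
  shows "invertible (matrix_inv A)"
  unfolding invertible_def using matrix_inv_left[OF assms] matrix_inv_right[OF assms] by blast

lemma matrix_inv_unique:
  fixes A B :: "'a::field^'n^'n"
  assumes "A ** B = mat 1"
  shows "matrix_inv A = B"
proof -
  have "invertible A"
    using assms invertible_right_inverse by blast
  then have "matrix_inv A = matrix_inv A ** (A ** B)"
    by (simp add: assms matrix_mul_rid)
  also have "\<dots> = B"
    using \<open>invertible A\<close> by (simp add: matrix_mul_assoc matrix_inv_left matrix_mul_lid)
  finally show ?thesis .
qed

lemma invertible_imp_inj_rows:
  fixes A :: "'a::semiring_1^'n^'n"
  assumes "invertible A"
  shows "inj (($) A)"
proof (rule injI)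
  fix i j
  assume "A $ i = A $ j"
  then have "(A ** matrix_inv A) $ i $ i = (A ** matrix_inv A) $ j $ i"
    by (simp add: matrix_matrix_mult_def)
  then show "i = j"
    using assms by (simp add: matrix_inv_right mat_def split: if_splits)
qed

lemma invertible_column_nonzero:
  fixes A :: "'a::semiring_1^'n^'n"
  assumes "invertible A"
  shows "\<exists>k. A $ k $ m \<noteq> 0"
proof (rule ccontr)
  assume "\<nexists>k. A $ k $ m \<noteq> 0"
  then have "(matrix_inv A ** A) $ m $ m = 0"
    by (simp add: matrix_matrix_mult_def)
  then show False
    using assms by (simp add: matrix_inv_left mat_def)
qed

lemma permutation_matrixI:
  fixes P :: "real^'n^'n"
  assumes "inj (($) P)" and "\<forall>i. \<exists>a. \<forall>j. P $ i $ j = (if j = a then 1 else 0)"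
  shows "permutation_matrix P"
proof -
  obtain p where p: "\<And>i j. P $ i $ j = (if j = p i then 1 else 0)"
    using assms(2) by metis
  then have P_eq: "P = (\<chi> i j. if j = p i then 1 else 0)"
    by (simp add: vec_eq_iff)
  have "inj p"
  proof (rule injI)
    fix i i'
    assume "p i = p i'"
    then have "P $ i = P $ i'"
      by (simp add: vec_eq_iff p)
    then show "i = i'"
      using assms(1) by (simp add: inj_eq)
  qed
  then have "p permutes UNIV"
    by (intro inj_imp_permutes) auto
  then show ?thesis
    unfolding permutation_matrix_def P_eq by blast
qed

definition weighted_variance :: "('a::finite \<Rightarrow> real) \<Rightarrow> ('a \<Rightarrow> real) \<Rightarrow> real" where
  "weighted_variance p u = (\<Sum>j\<in>UNIV. p j * (u j)\<^sup>2) - (\<Sum>j\<in>UNIV. p j * u j)\<^sup>2"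

lemma weighted_variance_eq_sum_sq_dev:
  assumes "(\<Sum>j\<in>UNIV. p j) = 1"
  shows "weighted_variance p u = (\<Sum>j\<in>UNIV. p j * (u j - (\<Sum>i\<in>UNIV. p i * u i))\<^sup>2)"
proof -
  define a where "a = (\<Sum>i\<in>UNIV. p i * u i)"
  have "(\<Sum>j\<in>UNIV. p j * (u j - a)\<^sup>2)
      = (\<Sum>j\<in>UNIV. p j * (u j)\<^sup>2) - 2 * a * (\<Sum>j\<in>UNIV. p j * u j) + a\<^sup>2 * (\<Sum>j\<in>UNIV. p j)"
    by (simp add: power2_eq_square algebra_simps sum.distrib sum_subtractf
        sum_distrib_left sum_distrib_right)
  also have "\<dots> = weighted_variance p u"
    using assms by (simp add: weighted_variance_def a_def power2_eq_square)
  finally show ?thesis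
    by (simp add: a_def)
qed

lemma weighted_variance_nonneg:
  assumes "(\<Sum>j\<in>UNIV. p j) = 1" and "\<And>j. 0 \<le> p j"
  shows "0 \<le> weighted_variance p u"
  unfolding weighted_variance_eq_sum_sq_dev[OF assms(1)]
  by (simp add: assms(2) sum_nonneg)

lemma weighted_variance_eq_0_imp_const:
  assumes "(\<Sum>j\<in>UNIV. p j) = 1" and "\<And>j. 0 \<le> p j"
    and "weighted_variance p u = 0" and "p j \<noteq> 0"
  shows "u j = (\<Sum>i\<in>UNIV. p i * u i)"
proof -
  have "\<forall>j\<in>UNIV. p j * (u j - (\<Sum>i\<in>UNIV. p i * u i))\<^sup>2 = 0"
    using assms(3) unfolding weighted_variance_eq_sum_sq_dev[OF assms(1)]
    by (subst (asm) sum_nonneg_eq_0_iff) (auto simp: assms(2))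
  then show ?thesis
    using assms(4) by auto
qed

lemma weighted_variance_point_mass:
  "weighted_variance (\<lambda>j. if j = a then 1 else 0) u = 0"
  by (simp add: weighted_variance_def of_bool_def[symmetric])

lemma point_mass_if_weighted_variance_0:
  fixes p :: "'n::finite \<Rightarrow> real" and U :: "real^'n^'n"
  assumes p_sum: "(\<Sum>j\<in>UNIV. p j) = 1" and p_nonneg: "\<And>j. 0 \<le> p j"
    and "inj (($) U)" and var0: "\<And>l. weighted_variance p (\<lambda>j. U $ j $ l) = 0"
  shows "\<exists>a. \<forall>j. p j = (if j = a then 1 else 0)"
proof -
  obtain a where "p a \<noteq> 0"
    using p_sum sum.neutral[of UNIV p] by force
  have const: "U $ i $ l = (\<Sum>j\<in>UNIV. p j * U $ j $ l)" if "p i \<noteq> 0" for i l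
    using weighted_variance_eq_0_imp_const[OF p_sum p_nonneg var0 that] .
  have outside: "p j = 0" if "j \<noteq> a" for j
  proof (rule ccontr)
    assume "p j \<noteq> 0"
    then have "U $ j = U $ a"
      using const \<open>p a \<noteq> 0\<close> by (simp add: vec_eq_iff)
    then show False
      using \<open>inj (($) U)\<close> that by (simp add: inj_eq)
  qed
  have "(\<Sum>j\<in>UNIV. p j) = p a"
    by (rule sum.remove[where x=a, THEN trans]) (auto intro!: sum.neutral outside)
  then show ?thesis
    using p_sum outside by auto
qed

lemma Phi_entry:
  "Phi A $ k $ l = (\<Sum>j\<in>UNIV. A $ k $ j * (matrix_inv A $ j $ l)\<^sup>2)"
  by (simp add: Phi_def matrix_matrix_mult_def hadamard_def power2_eq_square)

lemma Phi_mult_minus_Phi: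
  fixes W W' :: "real^'n^'n"
  assumes "invertible (W ** W')"
  shows "Phi (W ** W') $ k $ l - Phi W $ k $ l =
    (\<Sum>m\<in>UNIV. W $ k $ m *
      weighted_variance (\<lambda>j. W' $ m $ j) (\<lambda>j. matrix_inv (W ** W') $ j $ l))"
proof -
  define U where "U = matrix_inv (W ** W')"
  have "matrix_inv W = W' ** U"
    by (rule matrix_inv_unique) (simp add: U_def matrix_mul_assoc matrix_inv_right assms)
  then have Phi_W: "Phi W $ k $ l = (\<Sum>m\<in>UNIV. W $ k $ m * (\<Sum>j\<in>UNIV. W' $ m $ j * U $ j $ l)\<^sup>2)"
    by (simp add: Phi_entry matrix_matrix_mult_def)
  have "Phi (W ** W') $ k $ l
      = (\<Sum>j\<in>UNIV. (\<Sum>m\<in>UNIV. W $ k $ m * W' $ m $ j) * (U $ j $ l)\<^sup>2)"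
    by (simp add: Phi_entry U_def matrix_matrix_mult_def)
  also have "\<dots> = (\<Sum>m\<in>UNIV. W $ k $ m * (\<Sum>j\<in>UNIV. W' $ m $ j * (U $ j $ l)\<^sup>2))"
    unfolding sum_distrib_right sum_distrib_left mult.assoc by (rule sum.swap)
  finally show ?thesis
    by (simp add: Phi_W U_def weighted_variance_def sum_subtractf right_diff_distrib)
qed

lemma Phi_mult_ge:
  fixes W W' :: "real^'n^'n"
  assumes "invertible (W ** W')" and "\<And>i j. 0 \<le> W $ i $ j" and "row_stochastic W'"
  shows "mat_ge (Phi (W ** W')) (Phi W)"
  unfolding mat_ge_def
proof (intro allI)
  fix k l
  have "0 \<le> Phi (W ** W') $ k $ l - Phi W $ k $ l"
    unfolding Phi_mult_minus_Phi[OF assms(1)]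
    using assms(3) unfolding row_stochastic_def
    by (intro sum_nonneg mult_nonneg_nonneg assms(2) weighted_variance_nonneg) auto
  then show "Phi W $ k $ l \<le> Phi (W ** W') $ k $ l"
    by simp
qed

lemma Phi_mult_eq_iff_permutation_matrix:
  fixes W W' :: "real^'n^'n"
  assumes "invertible W" and "invertible W'"
    and W_nonneg: "\<And>i j. 0 \<le> W $ i $ j" and "row_stochastic W'"
  shows "(\<forall>k l. Phi (W ** W') $ k $ l = Phi W $ k $ l) \<longleftrightarrow> permutation_matrix W'"
proof -
  define U where "U = matrix_inv (W ** W')"
  define D where "D m l = weighted_variance (\<lambda>j. W' $ m $ j) (\<lambda>j. U $ j $ l)" for m l
  have W'_sum: "\<And>m. (\<Sum>j\<in>UNIV. W' $ m $ j) = 1" and W'_nonneg: "\<And>m j. 0 \<le> W' $ m $ j"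
    using \<open>row_stochastic W'\<close> by (auto simp: row_stochastic_def)
  have D_nonneg: "0 \<le> D m l" for m l
    unfolding D_def by (rule weighted_variance_nonneg[OF W'_sum W'_nonneg])
  have "invertible (W ** W')"
    using assms(1,2) by (rule invertible_mult)
  then have diff: "Phi (W ** W') $ k $ l - Phi W $ k $ l = (\<Sum>m\<in>UNIV. W $ k $ m * D m l)" for k l
    unfolding D_def U_def by (rule Phi_mult_minus_Phi)
  have "(\<forall>k l. Phi (W ** W') $ k $ l = Phi W $ k $ l) \<longleftrightarrow> (\<forall>m l. D m l = 0)"
  proof
    assume eq: "\<forall>k l. Phi (W ** W') $ k $ l = Phi W $ k $ l"
    show "\<forall>m l. D m l = 0"
    proof (intro allI)
      fix m l
      obtain k where "W $ k $ m \<noteq> 0"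
        using invertible_column_nonzero[OF assms(1)] by blast
      moreover have "(\<Sum>m\<in>UNIV. W $ k $ m * D m l) = 0"
        using diff[of k l] eq by simp
      then have "\<forall>m\<in>UNIV. W $ k $ m * D m l = 0"
        by (subst (asm) sum_nonneg_eq_0_iff) (auto simp: W_nonneg D_nonneg)
      ultimately show "D m l = 0"
        by auto
    qed
  next
    assume "\<forall>m l. D m l = 0"
    then show "\<forall>k l. Phi (W ** W') $ k $ l = Phi W $ k $ l"
      using diff by simp
  qed
  also have "\<dots> \<longleftrightarrow> permutation_matrix W'"
  proof
    assume "\<forall>m l. D m l = 0"
    moreover have "inj (($) U)"
      unfolding U_def
      by (intro invertible_imp_inj_rows invertible_matrix_inv \<open>invertible (W ** W')\<close>)
    ultimately have "\<forall>m. \<exists>a. \<forall>j. W' $ m $ j = (if j = a then 1 else 0)"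
      unfolding D_def
      using point_mass_if_weighted_variance_0[OF W'_sum W'_nonneg] by blast
    then show "permutation_matrix W'"
      by (intro permutation_matrixI invertible_imp_inj_rows assms(2))
  next
    assume "permutation_matrix W'"
    then obtain p where "W' = (\<chi> i j. if j = p i then 1 else 0)"
      unfolding permutation_matrix_def by blast
    then show "\<forall>m l. D m l = 0"
      by (simp add: D_def weighted_variance_point_mass)
  qed
  finally show ?thesis .
qed

theorem theorem7:
  fixes W W' :: "real^'n^'n"
  assumes "CARD('n) \<ge> 2"
    and "invertible W" and "invertible W'"
    and "row_stochastic W" and "row_stochastic W'"
  shows "mat_ge (Phi (W ** W')) (Phi W) \<and>
         ((\<forall>k l. Phi (W ** W') $ k $ l = Phi W $ k $ l) \<longleftrightarrow> permutation_matrix W')"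
proof -
  have W_nonneg: "\<And>i j. 0 \<le> W $ i $ j"
    using \<open>row_stochastic W\<close> by (simp add: row_stochastic_def)
  have "invertible (W ** W')"
    using assms(2,3) by (rule invertible_mult)
  then show ?thesis
    using Phi_mult_ge Phi_mult_eq_iff_permutation_matrix assms(2,3,5) W_nonneg by blast
qed

end
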